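(* Let $M$ be a non-quasianalytic weight sequence and $M'$ a positive sequence. If $M'\prec_{SV}M$, then $M'^{[n]}\prec_{SV}M^{[4n]}$ for all positive integers $n$.
   Context: A weight sequence is $M=(M_k)_{k\ge0}$ with $M_k=\mu_0\cdots\mu_k$, $1=\mu_0\le\mu_1\le\cdots$, $\mu_k\to\infty$; non-quasianalytic if $\sum1/\mu_k<\infty$. For a positive sequence $N$ and $n\in\mathbb{N}_{\ge1}$, $N^{[n]}_j:=N_{nj}^{1/n}$ (for a non-quasianalytic weight sequence $M$, $M^{[n]}$ is again one, with quotients $\mu^{[n]}_j=(\mu_{n(j-1)+1}\cdots\mu_{nj})^{1/n}$). For a positive sequence $M'$ and a non-quasianalytic weight sequence $M$, $M'\prec_{SV}M$ means: $\exists s\in\mathbb{N}_{\ge1}$ with $\sup_{j\ge1}\frac1j\sup_{0\le i<j}(M'_j/(s^jM_i))^{1/(j-i)}\sum_{k\ge j}1/\mu_k<\infty$. *)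

theory Defs
  imports Complex_Main
begin

definition quot :: "(nat \<Rightarrow> real) \<Rightarrow> nat \<Rightarrow> real" where
  "quot M k = (if k = 0 then 1 else M k / M (k - 1))"

definition weight_seq :: "(nat \<Rightarrow> real) \<Rightarrow> bool" where
  "weight_seq M \<longleftrightarrow> M 0 = 1 \<and> (\<forall>k. M k > 0) \<and> mono (quot M)
     \<and> filterlim (quot M) at_top sequentially"

definition nq_weight_seq :: "(nat \<Rightarrow> real) \<Rightarrow> bool" where
  "nq_weight_seq M \<longleftrightarrow> weight_seq M \<and> summable (\<lambda>k. 1 / quot M k)"

definition pow_seq :: "nat \<Rightarrow> (nat \<Rightarrow> real) \<Rightarrow> nat \<Rightarrow> real" where
  "pow_seq n N j = root n (N (n * j))"

text \<open>M' \<prec>_SV M: exists s >= 1 such that the supremum over j >= 1 of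
  (1/j) sup_{0<=i<j} (M'_j/(s^j M_i))^(1/(j-i)) * sum_{k>=j} 1/mu_k is finite
  (all quantities are nonnegative, so finiteness of the sup = boundedness).\<close>
definition SV_prec :: "(nat \<Rightarrow> real) \<Rightarrow> (nat \<Rightarrow> real) \<Rightarrow> bool" where
  "SV_prec M' M \<longleftrightarrow> (\<exists>s::nat. s \<ge> 1 \<and> (\<exists>C::real. \<forall>j\<ge>1. \<forall>i<j.
      (1 / real j) * (M' j / (real s ^ j * M i)) powr (1 / real (j - i))
        * (\<Sum>k. 1 / quot M (k + j)) \<le> C))"

end

theory Submission
  imports Defs
begin

text \<open>Compare the expression defining \<open>M'^[n] \<prec>_SV M^[4n]\<close> at \<open>(j, i)\<close> with the one
  defining \<open>M' \<prec>_SV M\<close> at \<open>(n j, n i)\<close>. Log-convexity of \<open>M\<close> gives \<open>M_a^4 \<le> M_4a\<close>, hence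
  \<open>M_ni^(1/n) \<le> M^[4n]_i\<close>, so the root factor of the former is at most that of the latter.
  Every quotient \<open>\<mu>^[4n]_k\<close> is at least \<open>\<mu>_(4n(k-1)+1)\<close>, which for \<open>k \<ge> 2\<close> dominates the \<open>n\<close>
  quotients \<open>\<mu>_m\<close>, \<open>n k \<le> m < n (k+1)\<close>; grouping the tail sum of \<open>1/\<mu>\<close> in blocks of
  length \<open>n\<close> bounds the tail of \<open>1/\<mu>^[4n]\<close> from \<open>j\<close> by \<open>1/n\<close> times the tail of \<open>1/\<mu>\<close> from
  \<open>n j\<close>. This factor \<open>1/n\<close> turns the prefactor \<open>1/j\<close> into \<open>1/(n j)\<close>, so for \<open>j \<ge> 2\<close> the
  former expression is bounded by the latter; \<open>j = 1\<close> forces \<open>i = 0\<close> and adds one value.\<close>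

lemma weight_seq_pos: "weight_seq M \<Longrightarrow> 0 < M k"
  by (simp add: weight_seq_def)

lemma weight_seq_quot_mono: "weight_seq M \<Longrightarrow> a \<le> b \<Longrightarrow> quot M a \<le> quot M b"
  by (simp add: weight_seq_def monoD)

lemma weight_seq_quot_ge_1: "weight_seq M \<Longrightarrow> 1 \<le> quot M k"
  using weight_seq_quot_mono[of M 0 k] by (simp add: quot_def)

lemma weight_seq_Suc: "weight_seq M \<Longrightarrow> M (Suc k) = M k * quot M (Suc k)"
  using weight_seq_pos[of M k] by (simp add: quot_def)

lemma weight_seq_mult_quot_power_le:
  assumes "weight_seq M"
  shows "M a * quot M (Suc a) ^ b \<le> M (a + b)"
proof (induction b)
  case 0
  then show ?case by simp
next
  case (Suc b)
  have "M a * quot M (Suc a) ^ Suc b = (M a * quot M (Suc a) ^ b) * quot M (Suc a)"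
    by simp
  also have "\<dots> \<le> M (a + b) * quot M (Suc (a + b))"
    using Suc weight_seq_quot_mono[OF assms, of "Suc a" "Suc (a + b)"]
      weight_seq_pos[OF assms, of "a + b"] weight_seq_quot_ge_1[OF assms, of "Suc a"]
    by (intro mult_mono) auto
  also have "\<dots> = M (a + Suc b)"
    using weight_seq_Suc[OF assms, of "a + b"] by simp
  finally show ?case .
qed

lemma weight_seq_le_quot_power:
  assumes "weight_seq M"
  shows "M a \<le> quot M a ^ a"
proof (induction a)
  case 0
  then show ?case using assms by (simp add: weight_seq_def)
next
  case (Suc a)
  have "M (Suc a) = M a * quot M (Suc a)"
    by (rule weight_seq_Suc[OF assms])
  also have "\<dots> \<le> quot M a ^ a * quot M (Suc a)"
    using Suc weight_seq_quot_ge_1[OF assms, of "Suc a"] by simp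
  also have "\<dots> \<le> quot M (Suc a) ^ a * quot M (Suc a)"
    using weight_seq_quot_mono[OF assms, of a "Suc a"] weight_seq_quot_ge_1[OF assms, of a]
    by (intro mult_right_mono power_mono) auto
  finally show ?case by (simp add: mult.commute)
qed

lemma weight_seq_mult_le:
  assumes "weight_seq M"
  shows "M a * M b \<le> M (a + b)"
proof -
  have ordered: "M a * M b \<le> M (a + b)" if "a \<le> b" for a b
  proof -
    have "M a \<le> quot M (Suc b) ^ a"
      using weight_seq_le_quot_power[OF assms, of a] that
        power_mono[OF weight_seq_quot_mono[OF assms, of a "Suc b"], of a]
        weight_seq_quot_ge_1[OF assms, of a] by linarith
    then have "M a * M b \<le> quot M (Suc b) ^ a * M b"
      using weight_seq_pos[OF assms, of b] by simp
    also have "\<dots> \<le> M (b + a)"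
      using weight_seq_mult_quot_power_le[OF assms, of b a] by (simp add: mult.commute)
    finally show ?thesis by (simp add: add.commute)
  qed
  show ?thesis
    using ordered[of a b] ordered[of b a] by (cases "a \<le> b") (simp_all add: ac_simps)
qed

lemma weight_seq_power_le:
  assumes "weight_seq M"
  shows "M a ^ m \<le> M (m * a)"
proof (induction m)
  case 0
  then show ?case using assms by (simp add: weight_seq_def)
next
  case (Suc m)
  have "M a ^ Suc m \<le> M a * M (m * a)"
    using Suc weight_seq_pos[OF assms, of a] by simp
  also have "\<dots> \<le> M (Suc m * a)"
    using weight_seq_mult_le[OF assms, of a "m * a"] by simp
  finally show ?case .
qed

lemma root_le_pow_seq:
  assumes "weight_seq M" "0 < n" "0 < m"
  shows "root n (M (n * i)) \<le> pow_seq (m * n) M i"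
proof -
  have "M (n * i) = root m (M (n * i) ^ m)"
    using weight_seq_pos[OF assms(1), of "n * i"] assms(3) by (simp add: real_root_power_cancel)
  also have "\<dots> \<le> root m (M (m * (n * i)))"
    using weight_seq_power_le[OF assms(1), of "n * i" m] assms(3) by (simp add: real_root_le_mono)
  finally have "root n (M (n * i)) \<le> root n (root m (M (m * (n * i))))"
    using assms(2) by (simp add: real_root_le_mono)
  also have "\<dots> = pow_seq (m * n) M i"
    by (simp add: pow_seq_def real_root_mult_exp real_root_commute[of n m] mult.assoc)
  finally show ?thesis .
qed

lemma quot_pow_seq_ge:
  assumes "weight_seq M" "0 < n" "1 \<le> k"
  shows "quot M (n * (k - 1) + 1) \<le> quot (pow_seq n M) k"
proof -
  define a where "a = n * (k - 1)"
  have nk: "n * k = a + n"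
    using assms(3) by (simp add: a_def algebra_simps)
  have "root n (M a) * quot M (Suc a) = root n (M a * quot M (Suc a) ^ n)"
    using weight_seq_quot_ge_1[OF assms(1), of "Suc a"] assms(2)
    by (simp add: real_root_mult real_root_power_cancel)
  also have "\<dots> \<le> root n (M (n * k))"
    unfolding nk using weight_seq_mult_quot_power_le[OF assms(1), of a n] assms(2)
    by (simp add: real_root_le_mono)
  finally have "quot M (Suc a) \<le> root n (M (n * k)) / root n (M a)"
    using weight_seq_pos[OF assms(1), of a] assms(2) by (simp add: field_simps)
  then show ?thesis
    using assms(3) by (simp add: quot_def pow_seq_def a_def)
qed

lemma quot_pow_seq_ge_1:
  assumes "weight_seq M" "0 < n" "1 \<le> k"
  shows "1 \<le> quot (pow_seq n M) k"
  using order.trans[OF weight_seq_quot_ge_1[OF assms(1)] quot_pow_seq_ge[OF assms]] .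

lemma quot_le_quot_pow_seq_4:
  assumes "weight_seq M" "0 < n" "2 \<le> k" "m < n * (k + 1)"
  shows "quot M m \<le> quot (pow_seq (4 * n) M) k"
proof -
  obtain l where l: "k = l + 2"
    using assms(3) le_Suc_ex by (metis add.commute)
  have "m \<le> 4 * n * (k - 1) + 1"
    using assms(4) unfolding l by (simp add: algebra_simps)
  then have "quot M m \<le> quot M (4 * n * (k - 1) + 1)"
    by (rule weight_seq_quot_mono[OF assms(1)])
  also have "\<dots> \<le> quot (pow_seq (4 * n) M) k"
    using assms by (intro quot_pow_seq_ge) auto
  finally show ?thesis .
qed

lemma suminf_le_block_bound:
  fixes f g :: "nat \<Rightarrow> real"
  assumes "summable f" "0 < n" "\<And>k. 0 \<le> g k"
    and "\<And>k m. m \<in> {k * n..<k * n + n} \<Longrightarrow> g k \<le> f m"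
  shows "summable g" "suminf g \<le> suminf f / n"
proof -
  define h where "h k = sum f {k * n..<k * n + n} / n" for k
  have h_sums: "h sums (suminf f / n)"
    unfolding h_def using sums_group[OF summable_sums[OF assms(1)] assms(2)] by (rule sums_divide)
  have g_le_h: "g k \<le> h k" for k
    using sum_bounded_below[of "{k * n..<k * n + n}" "g k" f] assms(2,4)
    by (simp add: h_def field_simps)
  show "summable g"
    by (rule summable_comparison_test'[OF sums_summable[OF h_sums], of 0])
      (use g_le_h assms(3) in auto)
  then have "suminf g \<le> suminf h"
    using g_le_h sums_summable[OF h_sums] by (intro suminf_le)
  then show "suminf g \<le> suminf f / n"
    using sums_unique[OF h_sums] by simp
qed

lemma tail_pow_seq_4_le:
  assumes "nq_weight_seq M" "0 < n" "2 \<le> j"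
  shows "summable (\<lambda>k. 1 / quot (pow_seq (4 * n) M) (k + j))"
    and "(\<Sum>k. 1 / quot (pow_seq (4 * n) M) (k + j)) \<le> (\<Sum>k. 1 / quot M (k + n * j)) / n"
proof -
  have W: "weight_seq M" and S: "summable (\<lambda>k. 1 / quot M k)"
    using assms(1) by (auto simp: nq_weight_seq_def)
  have summable_shift: "summable (\<lambda>m. 1 / quot M (m + n * j))"
    using S by (subst summable_iff_shift)
  have block: "1 / quot (pow_seq (4 * n) M) (k + j) \<le> 1 / quot M (m + n * j)"
    if "m \<in> {k * n..<k * n + n}" for k m
  proof -
    have "m + n * j < n * (k + j + 1)"
      using that by (simp add: algebra_simps)
    then have "quot M (m + n * j) \<le> quot (pow_seq (4 * n) M) (k + j)"
      using assms(2,3) by (intro quot_le_quot_pow_seq_4[OF W]) auto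
    then show ?thesis
      using weight_seq_quot_ge_1[OF W, of "m + n * j"] by (intro divide_left_mono) auto
  qed
  have nonneg: "0 \<le> 1 / quot (pow_seq (4 * n) M) (k + j)" for k
    using quot_pow_seq_ge_1[OF W, of "4 * n" "k + j"] assms(2,3) by simp
  show "summable (\<lambda>k. 1 / quot (pow_seq (4 * n) M) (k + j))"
    using suminf_le_block_bound(1)[OF summable_shift assms(2) nonneg block] .
  show "(\<Sum>k. 1 / quot (pow_seq (4 * n) M) (k + j)) \<le> (\<Sum>k. 1 / quot M (k + n * j)) / n"
    using suminf_le_block_bound(2)[OF summable_shift assms(2) nonneg block] .
qed

definition SV_term :: "(nat \<Rightarrow> real) \<Rightarrow> (nat \<Rightarrow> real) \<Rightarrow> nat \<Rightarrow> nat \<Rightarrow> nat \<Rightarrow> real" where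
  "SV_term M' M s j i = (1 / real j) * (M' j / (real s ^ j * M i)) powr (1 / real (j - i))
      * (\<Sum>k. 1 / quot M (k + j))"

lemma SV_prec_iff_SV_term:
  "SV_prec M' M \<longleftrightarrow> (\<exists>s\<ge>1. \<exists>C. \<forall>j\<ge>1. \<forall>i<j. SV_term M' M s j i \<le> C)"
  by (simp add: SV_prec_def SV_term_def)

lemma SV_root_factor_pow_seq_le:
  assumes "weight_seq M" "\<forall>k. 0 < M' k" "0 < n" "0 < m" "0 < s" "i < j"
  shows "(pow_seq n M' j / (real s ^ j * pow_seq (m * n) M i)) powr (1 / real (j - i))
    \<le> (M' (n * j) / (real s ^ (n * j) * M (n * i))) powr (1 / real (n * j - n * i))"
proof -
  define x where "x = M' (n * j) / (real s ^ (n * j) * M (n * i))"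
  have pos: "0 < x" "0 < pow_seq (m * n) M i" "0 < root n (M (n * i))" "0 < root n (M' (n * j))"
    using assms weight_seq_pos[OF assms(1)] by (simp_all add: x_def pow_seq_def real_root_gt_zero)
  have s_root: "root n (real s ^ (n * j)) = real s ^ j"
    using assms(3) by (simp add: mult.commute[of n j] power_mult real_root_power_cancel)
  have "pow_seq n M' j / (real s ^ j * pow_seq (m * n) M i)
      \<le> root n (M' (n * j)) / (real s ^ j * root n (M (n * i)))"
    unfolding pow_seq_def[of n M']
  proof (rule divide_left_mono)
    show "real s ^ j * root n (M (n * i)) \<le> real s ^ j * pow_seq (m * n) M i"
      using root_le_pow_seq[OF assms(1,3,4), of i] by (simp add: mult_left_mono)
    show "0 < real s ^ j * pow_seq (m * n) M i * (real s ^ j * root n (M (n * i)))"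
      using pos assms(5) by simp
  qed (use pos in simp)
  also have "\<dots> = root n x"
    by (simp add: x_def real_root_divide real_root_mult s_root)
  also have "\<dots> = x powr (1 / real n)"
    using pos assms(3) by (simp add: root_powr_inverse)
  finally have "(pow_seq n M' j / (real s ^ j * pow_seq (m * n) M i)) powr (1 / real (j - i))
      \<le> (x powr (1 / real n)) powr (1 / real (j - i))"
    using pos assms(2,5) by (intro powr_mono2) (simp_all add: pow_seq_def)
  also have "\<dots> = x powr (1 / real (n * j - n * i))"
    using assms(6) by (simp add: powr_powr diff_mult_distrib2[symmetric] of_nat_diff)
  finally show ?thesis by (simp add: x_def)
qed

lemma SV_term_pow_seq_le:
  assumes "nq_weight_seq M" "\<forall>k. 0 < M' k" "0 < n" "1 \<le> s" "2 \<le> j" "i < j"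
  shows "SV_term (pow_seq n M') (pow_seq (4 * n) M) s j i \<le> SV_term M' M s (n * j) (n * i)"
proof -
  have W: "weight_seq M"
    using assms(1) by (simp add: nq_weight_seq_def)
  let ?T = "\<Sum>k. 1 / quot (pow_seq (4 * n) M) (k + j)"
  have "0 \<le> 1 / quot (pow_seq (4 * n) M) (k + j)" for k
    using quot_pow_seq_ge_1[OF W, of "4 * n" "k + j"] assms(3,5) by simp
  then have "0 \<le> ?T"
    using tail_pow_seq_4_le(1)[OF assms(1,3,5)] by (intro suminf_nonneg)
  then have "SV_term (pow_seq n M') (pow_seq (4 * n) M) s j i
      \<le> (1 / real j) * (M' (n * j) / (real s ^ (n * j) * M (n * i))) powr (1 / real (n * j - n * i))
        * ((\<Sum>k. 1 / quot M (k + n * j)) / n)"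
    unfolding SV_term_def using assms
    by (intro mult_mono mult_left_mono SV_root_factor_pow_seq_le[OF W, of M' n 4] tail_pow_seq_4_le(2))
      auto
  also have "\<dots> = SV_term M' M s (n * j) (n * i)"
    by (simp add: SV_term_def)
  finally show ?thesis .
qed

theorem lemma5p2:
  fixes M M' :: "nat \<Rightarrow> real"
  assumes "nq_weight_seq M"
    and "\<forall>k. M' k > 0"
    and "SV_prec M' M"
  shows "\<forall>n::nat. n \<ge> 1 \<longrightarrow> SV_prec (pow_seq n M') (pow_seq (4 * n) M)"
proof (intro allI impI)
  fix n :: nat
  assume "n \<ge> 1"
  obtain s C where s: "s \<ge> 1" and C: "\<forall>j\<ge>1. \<forall>i<j. SV_term M' M s j i \<le> C"
    using assms(3) unfolding SV_prec_iff_SV_term by blast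
  let ?C = "max C (SV_term (pow_seq n M') (pow_seq (4 * n) M) s 1 0)"
  have "SV_term (pow_seq n M') (pow_seq (4 * n) M) s j i \<le> ?C" if "1 \<le> j" "i < j" for i j
  proof (cases "j = 1")
    case False
    then have "SV_term (pow_seq n M') (pow_seq (4 * n) M) s j i \<le> SV_term M' M s (n * j) (n * i)"
      using that \<open>n \<ge> 1\<close> s by (intro SV_term_pow_seq_le[OF assms(1,2)]) auto
    also have "\<dots> \<le> C"
      using C that \<open>n \<ge> 1\<close> by simp
    finally show ?thesis by simp
  qed (use that in simp)
  then show "SV_prec (pow_seq n M') (pow_seq (4 * n) M)"
    unfolding SV_prec_iff_SV_term using s by blast
qed

end
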